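(* Suppose that $(R,\mathfrak m)$ is $F$-pure and let $(\mathfrak a_\lambda)_{\lambda\in\Lambda}$ be a non-empty family of fully $\Phi(E)$-special ideals of $R$. Then $\sum_{\lambda\in\Lambda}\mathfrak a_\lambda$ is fully $\Phi(E)$-special.
   Context: $(R,\mathfrak m)$ is a commutative Noetherian local ring of prime characteristic $p$. $R$ is $F$-pure if for every $R$-module $M$ the map $M\to R^{(1)}\otimes_RM$, $m\mapsto1\otimes m$, is injective ($R^{(1)}$ = $R$ with right structure via $r\mapsto r^p$). The Frobenius skew polynomial ring $R[x,f]$ consists of polynomials $\sum r_ix^i$, free left $R$-module on $(x^i)_{i\ge0}$, with $xr=r^px$. $E=E_R(R/\mathfrak m)$; $\Phi(E)=R[x,f]\otimes_RE=\bigoplus_nRx^n\otimes_RE$, with $0$th component identified with $E$. $\operatorname{ann}_{\Phi(E)}(\mathfrak aR[x,f])$ is the submodule of elements annihilated by all $rx^n$, $r\in\mathfrak a$, $n\ge0$; $\mathfrak a$ is fully $\Phi(E)$-special if $(0:_E\mathfrak a)$ is contained in the $0$th component of $\operatorname{ann}_{\Phi(E)}(\mathfrak aR[x,f])$. *)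

theory Defs
  imports "HOL-Algebra.Algebra" "HOL-Computational_Algebra.Primes"
begin

definition local_ring :: "('r, 'b) ring_scheme \<Rightarrow> 'r set \<Rightarrow> bool" where
  "local_ring R m \<longleftrightarrow> cring R \<and> maximalideal m R \<and>
     (\<forall>I. maximalideal I R \<longrightarrow> I = m)"

definition char_p :: "('r, 'b) ring_scheme \<Rightarrow> nat \<Rightarrow> bool" where
  "char_p R p \<longleftrightarrow> Factorial_Ring.prime p \<and> add_pow R p \<one>\<^bsub>R\<^esub> = \<zero>\<^bsub>R\<^esub>"

definition lin_on :: "('r, 'b) ring_scheme \<Rightarrow> ('r, 'm) module \<Rightarrow> ('r, 'n) module
    \<Rightarrow> 'm set \<Rightarrow> ('m \<Rightarrow> 'n) \<Rightarrow> bool" where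
  "lin_on R M N S f \<longleftrightarrow> f ` S \<subseteq> carrier N \<and>
     (\<forall>x\<in>S. \<forall>y\<in>S. f (x \<oplus>\<^bsub>M\<^esub> y) = f x \<oplus>\<^bsub>N\<^esub> f y) \<and>
     (\<forall>r\<in>carrier R. \<forall>x\<in>S. f (r \<odot>\<^bsub>M\<^esub> x) = r \<odot>\<^bsub>N\<^esub> f x)"

text \<open>R x^n, as a right R-module, is the additive group of R with right action
  (r x^n) s = r s^(p^n) x^n.  The tensor product  R x^n \<otimes>_R M  is the free abelian
  group on (carrier R) \<times> (carrier M) modulo the subgroup generated by the biadditivity
  relations and the balancing relation  (r x^n) s \<otimes> x = r x^n \<otimes> s x.
  Below q stands for p^n; elements of the free abelian group are finitely supported
  integer-valued functions; gen a x is the basis element (a, x).\<close>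

definition gen :: "'r \<Rightarrow> 'm \<Rightarrow> ('r \<times> 'm \<Rightarrow> int)" where
  "gen a x = (\<lambda>z. if z = (a, x) then 1 else 0)"

inductive_set tensor_rel :: "('r, 'b) ring_scheme \<Rightarrow> ('r, 'm) module \<Rightarrow> nat
    \<Rightarrow> ('r \<times> 'm \<Rightarrow> int) set"
  for R M q where
  rel_zero: "(\<lambda>_. 0) \<in> tensor_rel R M q"
| rel_add: "u \<in> tensor_rel R M q \<Longrightarrow> v \<in> tensor_rel R M q
     \<Longrightarrow> (\<lambda>z. u z + v z) \<in> tensor_rel R M q"
| rel_neg: "u \<in> tensor_rel R M q \<Longrightarrow> (\<lambda>z. - u z) \<in> tensor_rel R M q"
| rel_addl: "\<lbrakk>a \<in> carrier R; b \<in> carrier R; x \<in> carrier M\<rbrakk> \<Longrightarrow>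
     (\<lambda>z. gen (a \<oplus>\<^bsub>R\<^esub> b) x z - gen a x z - gen b x z) \<in> tensor_rel R M q"
| rel_addr: "\<lbrakk>a \<in> carrier R; x \<in> carrier M; y \<in> carrier M\<rbrakk> \<Longrightarrow>
     (\<lambda>z. gen a (x \<oplus>\<^bsub>M\<^esub> y) z - gen a x z - gen a y z) \<in> tensor_rel R M q"
| rel_bal: "\<lbrakk>a \<in> carrier R; s \<in> carrier R; x \<in> carrier M\<rbrakk> \<Longrightarrow>
     (\<lambda>z. gen (a \<otimes>\<^bsub>R\<^esub> (s [^]\<^bsub>R\<^esub> q)) x z - gen a (s \<odot>\<^bsub>M\<^esub> x) z) \<in> tensor_rel R M q"

definition tensor_eq :: "('r, 'b) ring_scheme \<Rightarrow> ('r, 'm) module \<Rightarrow> nat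
    \<Rightarrow> 'r \<Rightarrow> 'm \<Rightarrow> 'r \<Rightarrow> 'm \<Rightarrow> bool" where
  "tensor_eq R M q a x b y \<longleftrightarrow> (\<lambda>z. gen a x z - gen b y z) \<in> tensor_rel R M q"

definition tensor_zero :: "('r, 'b) ring_scheme \<Rightarrow> ('r, 'm) module \<Rightarrow> nat
    \<Rightarrow> 'r \<Rightarrow> 'm \<Rightarrow> bool" where
  "tensor_zero R M q a x \<longleftrightarrow> gen a x \<in> tensor_rel R M q"

text \<open>R is F-pure: for every R-module M the map M \<rightarrow> R^(1) \<otimes>_R M, x \<mapsto> 1 \<otimes> x, is
  injective.  Modules are taken with carriers in the universe type 'u
  (instantiated in the statement with a type large enough).\<close>
definition F_pure :: "'u itself \<Rightarrow> ('r, 'b) ring_scheme \<Rightarrow> nat \<Rightarrow> bool" where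
  "F_pure _ R p \<longleftrightarrow> (\<forall>M :: ('r, 'u) module. module R M \<longrightarrow>
     (\<forall>x\<in>carrier M. \<forall>y\<in>carrier M.
        tensor_eq R M p \<one>\<^bsub>R\<^esub> x \<one>\<^bsub>R\<^esub> y \<longrightarrow> x = y))"

definition injective_module :: "'u itself \<Rightarrow> ('r, 'b) ring_scheme \<Rightarrow> ('r, 'e) module \<Rightarrow> bool" where
  "injective_module _ R E \<longleftrightarrow> module R E \<and>
     (\<forall>(M :: ('r, 'u) module) N f. module R M \<and> submodule N R M \<and> lin_on R M E N f \<longrightarrow>
        (\<exists>g. lin_on R M E (carrier M) g \<and> (\<forall>x\<in>N. g x = f x)))"

text \<open>E = E_R(R/m): an injective module together with an essential monomorphism
  R/m \<rightarrow> E; e0 is the image of the class of 1, so its annihilator is m, the image is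
  R e0, and essentiality says every nonzero submodule of E meets R e0 nontrivially.\<close>
definition injective_hull_residue :: "'u itself \<Rightarrow> ('r, 'b) ring_scheme \<Rightarrow> 'r set
    \<Rightarrow> ('r, 'e) module \<Rightarrow> bool" where
  "injective_hull_residue U R m E \<longleftrightarrow> injective_module U R E \<and>
     (\<exists>e0\<in>carrier E. {r \<in> carrier R. r \<odot>\<^bsub>E\<^esub> e0 = \<zero>\<^bsub>E\<^esub>} = m \<and>
        (\<forall>N. submodule N R E \<and> N \<noteq> {\<zero>\<^bsub>E\<^esub>} \<longrightarrow>
           (\<exists>r\<in>carrier R. r \<odot>\<^bsub>E\<^esub> e0 \<noteq> \<zero>\<^bsub>E\<^esub> \<and> r \<odot>\<^bsub>E\<^esub> e0 \<in> N)))"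

definition ann_E :: "('r, 'b) ring_scheme \<Rightarrow> ('r, 'e) module \<Rightarrow> 'r set \<Rightarrow> 'e set" where
  "ann_E R E a = {e \<in> carrier E. \<forall>r\<in>a. r \<odot>\<^bsub>E\<^esub> e = \<zero>\<^bsub>E\<^esub>}"

text \<open>The 0th component of ann_{Phi(E)}(a R[x,f]), as a subset of E = R x^0 \<otimes> E:
  e (i.e. 1 \<otimes> e in degree 0) is annihilated by every r x^n with r \<in> a, and
  r x^n \<cdot> (1 \<otimes> e) = r x^n \<otimes> e in the degree-n component R x^n \<otimes>_R E.\<close>
definition ann_Phi_deg0 :: "('r, 'b) ring_scheme \<Rightarrow> nat \<Rightarrow> ('r, 'e) module \<Rightarrow> 'r set \<Rightarrow> 'e set" where
  "ann_Phi_deg0 R p E a = {e \<in> carrier E. \<forall>n::nat. \<forall>r\<in>a. tensor_zero R E (p ^ n) r e}"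

definition fully_Phi_special :: "('r, 'b) ring_scheme \<Rightarrow> nat \<Rightarrow> ('r, 'e) module \<Rightarrow> 'r set \<Rightarrow> bool" where
  "fully_Phi_special R p E a \<longleftrightarrow> ann_E R E a \<subseteq> ann_Phi_deg0 R p E a"

end

theory Submission
  imports Defs
begin

text \<open>Fix n and e in (0 :_E \<aa>), where \<aa> is the sum of the \<aa> \<lambda>. Each \<aa> \<lambda> annihilates e,
  so, being fully \<Phi>(E)-special, lies in the set of r with r x^n \<otimes> e = 0. That set is closed
  under addition, hence the largest ideal contained in it is an ideal containing every \<aa> \<lambda>,
  and therefore their sum.\<close>

lemma tensor_zero_add:
  assumes "a \<in> carrier R" "b \<in> carrier R" "x \<in> carrier M"
    and "tensor_zero R M q a x" "tensor_zero R M q b x"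
  shows "tensor_zero R M q (a \<oplus>\<^bsub>R\<^esub> b) x"
proof -
  have "(\<lambda>z. gen (a \<oplus>\<^bsub>R\<^esub> b) x z - gen a x z - gen b x z) \<in> tensor_rel R M q"
    using assms(1-3) by (rule tensor_rel.rel_addl)
  then have "(\<lambda>z. (gen (a \<oplus>\<^bsub>R\<^esub> b) x z - gen a x z - gen b x z) + gen a x z + gen b x z)
      \<in> tensor_rel R M q"
    using assms(4,5) unfolding tensor_zero_def by (intro tensor_rel.rel_add)
  then show ?thesis
    unfolding tensor_zero_def by (simp add: fun_eq_iff[symmetric])
qed

lemma (in ring) tensor_zero_zero:
  assumes "x \<in> carrier M"
  shows "tensor_zero R M q \<zero> x"
proof -
  have "(\<lambda>z. gen (\<zero> \<oplus> \<zero>) x z - gen \<zero> x z - gen \<zero> x z) \<in> tensor_rel R M q"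
    using assms by (intro tensor_rel.rel_addl) simp_all
  then have "(\<lambda>z. - (gen \<zero> x z - gen \<zero> x z - gen \<zero> x z)) \<in> tensor_rel R M q"
    by (intro tensor_rel.rel_neg) simp
  then show ?thesis
    unfolding tensor_zero_def by simp
qed

text \<open>All multiples s r are required to vanish, not just r: closure of \<open>tensor_zero\<close> under
  multiplication by R would need an analysis of \<open>tensor_rel\<close>.\<close>

definition tensor_zero_ideal ::
    "('r, 'b) ring_scheme \<Rightarrow> ('r, 'm) module \<Rightarrow> nat \<Rightarrow> 'm \<Rightarrow> 'r set" where
  "tensor_zero_ideal R M q x =
     {r \<in> carrier R. \<forall>s\<in>carrier R. tensor_zero R M q (s \<otimes>\<^bsub>R\<^esub> r) x}"

lemma (in cring) ideal_tensor_zero_ideal: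
  assumes "x \<in> carrier M"
  shows "ideal (tensor_zero_ideal R M q x) R"
proof (rule idealI)
  let ?S = "tensor_zero_ideal R M q x"
  show "ring R" by (rule ring_axioms)
  have mult_closed: "t \<otimes> r \<in> ?S" if "r \<in> ?S" "t \<in> carrier R" for r t
  proof -
    have "s \<otimes> (t \<otimes> r) = (s \<otimes> t) \<otimes> r" if "s \<in> carrier R" for s
      using that \<open>r \<in> ?S\<close> \<open>t \<in> carrier R\<close> by (simp add: m_assoc tensor_zero_ideal_def)
    then show ?thesis
      using that by (auto simp: tensor_zero_ideal_def)
  qed
  show "subgroup ?S (add_monoid R)"
  proof (rule add.subgroupI)
    show "?S \<subseteq> carrier R"
      by (auto simp: tensor_zero_ideal_def)
    show "?S \<noteq> {}"
      using tensor_zero_zero[OF assms] by (auto simp: tensor_zero_ideal_def)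
    show "\<ominus> r \<in> ?S" if "r \<in> ?S" for r
    proof -
      have "r \<in> carrier R"
        using that by (simp add: tensor_zero_ideal_def)
      then have "\<ominus> r = (\<ominus> \<one>) \<otimes> r"
        by (simp add: l_minus)
      then show ?thesis
        using mult_closed[OF that] by simp
    qed
    show "r \<oplus> r' \<in> ?S" if "r \<in> ?S" "r' \<in> ?S" for r r'
      using that assms
      by (auto simp: tensor_zero_ideal_def r_distr intro: tensor_zero_add)
  qed
  show "t \<otimes> r \<in> ?S" if "r \<in> ?S" "t \<in> carrier R" for r t
    using that by (rule mult_closed)
  show "r \<otimes> t \<in> ?S" if "r \<in> ?S" "t \<in> carrier R" for r t
    using mult_closed[OF that] that by (simp add: m_comm tensor_zero_ideal_def)
qed

lemma (in ring) ideal_subset_tensor_zero_ideal: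
  assumes "ideal I R" and "\<forall>r\<in>I. tensor_zero R M q r x"
  shows "I \<subseteq> tensor_zero_ideal R M q x"
  using assms ideal.I_l_closed[OF assms(1)] ideal.Icarr[OF assms(1)]
  by (auto simp: tensor_zero_ideal_def)

lemma (in ring) tensor_zero_of_tensor_zero_ideal:
  assumes "r \<in> tensor_zero_ideal R M q x"
  shows "tensor_zero R M q r x"
  using assms by (auto simp: tensor_zero_ideal_def dest: bspec[of _ _ \<one>])

lemma (in cring) tensor_zero_genideal_UN:
  assumes "x \<in> carrier M"
    and "\<forall>l\<in>L. ideal (\<aa> l) R \<and> (\<forall>r\<in>\<aa> l. tensor_zero R M q r x)"
    and "r \<in> genideal R (\<Union>l\<in>L. \<aa> l)"
  shows "tensor_zero R M q r x"
proof -
  have "\<aa> l \<subseteq> tensor_zero_ideal R M q x" if "l \<in> L" for l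
    using assms(2) that by (intro ideal_subset_tensor_zero_ideal) auto
  then have "(\<Union>l\<in>L. \<aa> l) \<subseteq> tensor_zero_ideal R M q x"
    by (rule UN_least)
  then have "genideal R (\<Union>l\<in>L. \<aa> l) \<subseteq> tensor_zero_ideal R M q x"
    by (rule genideal_minimal[OF ideal_tensor_zero_ideal[OF assms(1)]])
  then have "r \<in> tensor_zero_ideal R M q x"
    using assms(3) by blast
  then show ?thesis
    by (rule tensor_zero_of_tensor_zero_ideal)
qed

lemma (in cring) fully_Phi_special_genideal_UN:
  assumes "\<forall>l\<in>L. ideal (\<aa> l) R \<and> fully_Phi_special R p E (\<aa> l)"
  shows "fully_Phi_special R p E (genideal R (\<Union>l\<in>L. \<aa> l))"
  unfolding fully_Phi_special_def
proof
  fix e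
  assume e: "e \<in> ann_E R E (genideal R (\<Union>l\<in>L. \<aa> l))"
  then have e_carrier: "e \<in> carrier E"
    by (simp add: ann_E_def)
  have "(\<Union>l\<in>L. \<aa> l) \<subseteq> carrier R"
    using assms by (auto dest: ideal.Icarr)
  then have "\<aa> l \<subseteq> genideal R (\<Union>l\<in>L. \<aa> l)" if "l \<in> L" for l
    using genideal_self that by blast
  then have "e \<in> ann_E R E (\<aa> l)" if "l \<in> L" for l
    using e that unfolding ann_E_def by blast
  then have "e \<in> ann_Phi_deg0 R p E (\<aa> l)" if "l \<in> L" for l
    using assms that unfolding fully_Phi_special_def by blast
  then have "\<forall>l\<in>L. ideal (\<aa> l) R \<and> (\<forall>r\<in>\<aa> l. tensor_zero R E (p ^ n) r e)" for n
    using assms by (simp add: ann_Phi_deg0_def)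
  then have "tensor_zero R E (p ^ n) r e" if "r \<in> genideal R (\<Union>l\<in>L. \<aa> l)" for n r
    using tensor_zero_genideal_UN[OF e_carrier _ that] by blast
  with e_carrier show "e \<in> ann_Phi_deg0 R p E (genideal R (\<Union>l\<in>L. \<aa> l))"
    by (simp add: ann_Phi_deg0_def)
qed

theorem proposition1p9:
  fixes R :: "('r, 'b) ring_scheme" and m :: "'r set" and p :: nat
    and E :: "('r, 'e) module" and Lam :: "'i set" and \<aa> :: "'i \<Rightarrow> 'r set"
  assumes "noetherian_ring R"
    and "local_ring R m"
    and "char_p R p"
    and "F_pure TYPE('r list) R p"
    and "injective_hull_residue TYPE('r list) R m E"
    and "Lam \<noteq> {}"
    and "\<forall>l\<in>Lam. ideal (\<aa> l) R \<and> fully_Phi_special R p E (\<aa> l)"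
  shows "fully_Phi_special R p E (genideal R (\<Union>l\<in>Lam. \<aa> l))"
proof -
  interpret cring R
    using assms(2) by (simp add: local_ring_def)
  show ?thesis
    using assms(7) by (rule fully_Phi_special_genideal_UN)
qed

end
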